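(* Let $B$ be a standard Brownian motion. For every $a>2$ and $b<1/2$ there is a constant $c$ such that for all $y\ge0$, $$P\Big(\sup_{t>0}\Big(\frac{B(t)^2}{t}-a\log(1+|\log t|)\Big)>y\Big)\le ce^{-by}.$$ *)

theory Defs
  imports "HOL-Probability.Probability"
begin

definition standard_brownian_motion :: "'a measure \<Rightarrow> (real \<Rightarrow> 'a \<Rightarrow> real) \<Rightarrow> bool" where
  "standard_brownian_motion M B \<longleftrightarrow>
     prob_space M \<and>
     (\<forall>t. B t \<in> borel_measurable M) \<and>
     (\<forall>\<omega>\<in>space M. B 0 \<omega> = 0) \<and>
     (\<forall>\<omega>\<in>space M. continuous_on {0..} (\<lambda>t. B t \<omega>)) \<and>
     (\<forall>s t. 0 \<le> s \<and> s < t \<longrightarrow>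
        distributed M lborel (\<lambda>\<omega>. B t \<omega> - B s \<omega>)
          (\<lambda>x. ennreal (normal_density 0 (sqrt (t - s)) x))) \<and>
     (\<forall>(n::nat) (u::nat \<Rightarrow> real). 0 \<le> u 0 \<and> (\<forall>i<n. u i < u (Suc i)) \<longrightarrow>
        prob_space.indep_vars M (\<lambda>_. borel) (\<lambda>i \<omega>. B (u (Suc i)) \<omega> - B (u i) \<omega>) {..<n})"

end

theory Submission
  imports Defs
begin

text \<open>For \<open>\<theta> < 1/2\<close> a Chernoff bound gives \<open>P(B(T)\<^sup>2 > T z) \<le> exp(-\<theta> z) / sqrt(1 - 2\<theta>)\<close>;
  Levy's maximal inequality on dyadic grids and path continuity extend this, up to a factor 2, to
  the event that \<open>B(s)\<^sup>2 > T z\<close> for some \<open>s \<le> T\<close>. For \<open>q > 1\<close>, every \<open>t > 0\<close> lies in a block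
  \<open>[T/q, T]\<close> with \<open>T = q^(m+1)\<close> or \<open>T = q^(-m)\<close>, and there \<open>\<bar>ln t\<bar> \<ge> m ln q\<close>. Hence
  \<open>B(t)\<^sup>2/t - a ln(1 + \<bar>ln t\<bar>) > y\<close> forces \<open>B(t)\<^sup>2 > T z\<^sub>m\<close> with \<open>z\<^sub>m = (y + a ln(1 + m ln q))/q\<close>, an
  event of probability at most \<open>2 exp(-b y) (1 + m ln q) powr (-a\<theta>/q) / sqrt(1 - 2\<theta>)\<close> when
  \<open>b q \<le> \<theta>\<close>. As \<open>a > 2\<close> and \<open>b < 1/2\<close>, one can also arrange \<open>a\<theta>/q > 1\<close>, so the union bound over
  all blocks converges.\<close>

lemma normal_density_exp_tilt:
  fixes \<sigma> \<theta> x :: real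
  assumes "\<sigma> > 0" "0 \<le> \<theta>" "\<theta> < 1/2"
  shows "exp (\<theta> * x\<^sup>2 / \<sigma>\<^sup>2) * normal_density 0 \<sigma> x
       = normal_density 0 (\<sigma> / sqrt (1 - 2*\<theta>)) x / sqrt (1 - 2*\<theta>)"
proof -
  have p: "1 - 2*\<theta> > 0" using assms by simp
  have "normal_density 0 (\<sigma> / sqrt (1 - 2*\<theta>)) x
      = sqrt (1 - 2*\<theta>) / sqrt (2*pi*\<sigma>\<^sup>2) * exp (-x\<^sup>2 * (1 - 2*\<theta>) / (2*\<sigma>\<^sup>2))"
    using p assms by (simp add: normal_density_def power_divide real_sqrt_divide real_sqrt_mult field_simps)
  moreover have "exp (-x\<^sup>2 * (1 - 2*\<theta>) / (2*\<sigma>\<^sup>2)) = exp (\<theta> * x\<^sup>2 / \<sigma>\<^sup>2) * exp (-x\<^sup>2/(2*\<sigma>\<^sup>2))"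
    using assms by (simp add: exp_add[symmetric] field_simps)
  ultimately show ?thesis using p assms
    by (simp add: normal_density_def)
qed

text \<open>Chernoff bound: integrate \<open>exp (\<theta> (Y\<^sup>2/\<sigma>\<^sup>2 - z)) \<ge> 1\<close> over the event.\<close>
lemma (in prob_space) normal_square_tail:
  assumes D: "distributed M lborel Y (\<lambda>x. ennreal (normal_density 0 \<sigma> x))"
    and "\<sigma> > 0" "0 \<le> \<theta>" "\<theta> < 1/2"
  shows "prob {\<omega>\<in>space M. \<sigma>\<^sup>2 * z < (Y \<omega>)\<^sup>2} \<le> exp (-\<theta>*z) / sqrt (1 - 2*\<theta>)"
proof -
  have p: "1 - 2*\<theta> > 0" using assms by simp
  define \<tau> where "\<tau> = \<sigma> / sqrt (1 - 2*\<theta>)"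
  define C where "C = exp (-\<theta>*z) / sqrt (1 - 2*\<theta>)"
  let ?S = "{x::real. \<sigma>\<^sup>2 * z < x\<^sup>2}"
  have "?S \<in> sets lborel" by measurable
  then have "emeasure M (Y -` ?S \<inter> space M) = (\<integral>\<^sup>+x. ennreal (normal_density 0 \<sigma> x) * indicator ?S x \<partial>lborel)"
    by (rule distributed_emeasure[OF D])
  also have "\<dots> \<le> (\<integral>\<^sup>+x. ennreal (C * normal_density 0 \<tau> x) \<partial>lborel)"
  proof (rule nn_integral_mono)
    fix x :: real
    have "indicator ?S x * normal_density 0 \<sigma> x \<le> exp (\<theta> * (x\<^sup>2/\<sigma>\<^sup>2 - z)) * normal_density 0 \<sigma> x"
    proof (cases "x \<in> ?S")
      case True
      then have "0 < x\<^sup>2/\<sigma>\<^sup>2 - z" using assms by (simp add: field_simps)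
      then have "1 \<le> exp (\<theta> * (x\<^sup>2/\<sigma>\<^sup>2 - z))" using assms by simp
      then show ?thesis
        using True mult_right_mono[of 1 _ "normal_density 0 \<sigma> x"] by simp
    qed simp
    also have "\<dots> = exp (-\<theta>*z) * (exp (\<theta> * x\<^sup>2 / \<sigma>\<^sup>2) * normal_density 0 \<sigma> x)"
      by (simp add: exp_add[symmetric] algebra_simps)
    also have "\<dots> = C * normal_density 0 \<tau> x"
      using normal_density_exp_tilt[OF assms(2-4), of x] by (simp add: C_def \<tau>_def)
    finally show "ennreal (normal_density 0 \<sigma> x) * indicator ?S x \<le> ennreal (C * normal_density 0 \<tau> x)"
      by (auto simp: indicator_def intro: ennreal_leI)
  qed
  also have "\<dots> = ennreal C * (\<integral>\<^sup>+x. ennreal (normal_density 0 \<tau> x) \<partial>lborel)"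
    using p by (subst nn_integral_cmult[symmetric])
      (auto intro!: nn_integral_cong simp: C_def ennreal_mult'[symmetric])
  also have "(\<integral>\<^sup>+x. ennreal (normal_density 0 \<tau> x) \<partial>lborel) = 1"
    using integral_normal_density[of 0 \<tau>] p assms(2)
    by (subst nn_integral_eq_integral) (auto intro!: integrable_normal_density simp: \<tau>_def)
  finally show ?thesis
    using p by (simp add: emeasure_eq_measure vimage_def Int_def conj_commute C_def)
qed

lemma (in prob_space) normal_sign_prob_ge_half:
  assumes D: "distributed M lborel Y (\<lambda>x. ennreal (normal_density 0 \<sigma> x))" and s: "\<sigma> > 0"
  shows "1/2 \<le> prob {\<omega>\<in>space M. 0 \<le> Y \<omega>}" "1/2 \<le> prob {\<omega>\<in>space M. Y \<omega> \<le> 0}"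
proof -
  have D': "distributed M lborel (\<lambda>x. - Y x) (\<lambda>x. ennreal (normal_density 0 \<sigma> x))"
    using normal_density_affine[OF D s, of "-1" 0] by simp
  have m: "{0::real..} \<in> sets lborel" by simp
  have "{\<omega>\<in>space M. 0 \<le> Y \<omega>} = Y -` {0..} \<inter> space M"
    "{\<omega>\<in>space M. Y \<omega> \<le> 0} = (\<lambda>x. - Y x) -` {0..} \<inter> space M" by auto
  then have symm: "prob {\<omega>\<in>space M. 0 \<le> Y \<omega>} = prob {\<omega>\<in>space M. Y \<omega> \<le> 0}"
    unfolding measure_def using distributed_emeasure[OF D m] distributed_emeasure[OF D' m] by simp
  have "Y \<in> borel_measurable M" using D by (auto dest: distributed_measurable)
  then have "prob (space M) \<le> prob {\<omega>\<in>space M. 0 \<le> Y \<omega>} + prob {\<omega>\<in>space M. Y \<omega> \<le> 0}"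
    by (intro order.trans[OF _ measure_Un_le]) (auto intro!: finite_measure_mono)
  then show "1/2 \<le> prob {\<omega>\<in>space M. 0 \<le> Y \<omega>}" "1/2 \<le> prob {\<omega>\<in>space M. Y \<omega> \<le> 0}"
    using symm by (simp_all add: prob_space)
qed

definition first_exit :: "real \<Rightarrow> nat \<Rightarrow> (nat \<Rightarrow> real) \<Rightarrow> bool" where
  "first_exit x k y \<longleftrightarrow> x < \<bar>\<Sum>i<k. y i\<bar> \<and> (\<forall>j<k. \<bar>\<Sum>i<j. y i\<bar> \<le> x)"

lemma sum_lessThan_restrict:
  fixes j k :: nat
  assumes "j \<le> k"
  shows "(\<Sum>i<j. restrict y {..<k} i) = (\<Sum>i<j. y i)"
  using assms by (intro sum.cong) auto

lemma first_exit_restrict: "first_exit x k (restrict y {..<k}) = first_exit x k y"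
  unfolding first_exit_def by (simp add: sum_lessThan_restrict)

lemma first_exit_unique: "first_exit x j y \<Longrightarrow> first_exit x k y \<Longrightarrow> j = k"
  unfolding first_exit_def by (metis linorder_neqE_nat not_le)

lemma ex_first_exit:
  assumes "x < \<bar>\<Sum>i<n. y i\<bar>"
  shows "\<exists>k\<le>n. first_exit x k y"
proof -
  obtain k where "x < \<bar>\<Sum>i<k. y i\<bar>" and "\<forall>j<k. \<not> x < \<bar>\<Sum>i<j. y i\<bar>"
    using exists_least_iff[of "\<lambda>k. x < \<bar>\<Sum>i<k. y i\<bar>"] assms by blast
  moreover have "k \<le> n" using assms calculation(2) by (meson not_le)
  ultimately show ?thesis unfolding first_exit_def by (auto simp: not_less)
qed

lemma measurable_first_exit:
  assumes "{r. P r} \<in> sets borel"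
  shows "(\<lambda>y. first_exit x k y \<and> P (\<Sum>i<k. y i))
    \<in> measurable (PiM {..<k} (\<lambda>_. borel :: real measure)) (count_space UNIV)"
proof -
  have [measurable]: "(\<lambda>y. \<Sum>i<j. y i) \<in> borel_measurable (PiM {..<k} (\<lambda>_. borel :: real measure))"
    if "j \<le> k" for j
    using that by (intro borel_measurable_sum measurable_component_singleton) auto
  have [measurable]: "P \<in> measurable borel (count_space UNIV)"
    using assms by (simp add: pred_def)
  show ?thesis
    unfolding first_exit_def lessThan_iff[symmetric]
    by (intro pred_intros_logic pred_intros_finite) (measurable, simp_all)
qed

context prob_space
begin

lemma first_exit_suffix_event_sets:
  assumes "\<And>i. i < N \<Longrightarrow> X i \<in> borel_measurable M" and "k \<le> N"
    and "{r. P r} \<in> sets borel" and "R \<in> sets borel"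
  shows "{\<omega>\<in>space M. first_exit x k (\<lambda>i. X i \<omega>) \<and> P (\<Sum>i<k. X i \<omega>)
                    \<and> (\<Sum>i\<in>{k..<N}. X i \<omega>) \<in> R} \<in> sets M"
proof -
  have "(\<lambda>\<omega>. restrict (\<lambda>i. X i \<omega>) {..<k}) \<in> measurable M (PiM {..<k} (\<lambda>_. borel))"
    using assms(1,2) by (intro measurable_restrict) auto
  from predE[OF measurable_compose[OF this measurable_first_exit[OF assms(3)]]]
  have "{\<omega>\<in>space M. first_exit x k (\<lambda>i. X i \<omega>) \<and> P (\<Sum>i<k. X i \<omega>)} \<in> sets M"
    by (simp add: first_exit_restrict sum_lessThan_restrict)
  moreover have "(\<lambda>\<omega>. \<Sum>i\<in>{k..<N}. X i \<omega>) \<in> borel_measurable M"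
    using assms(1) by (intro borel_measurable_sum) auto
  from measurable_sets[OF this assms(4)] calculation
  have "{\<omega>\<in>space M. first_exit x k (\<lambda>i. X i \<omega>) \<and> P (\<Sum>i<k. X i \<omega>)}
      \<inter> ((\<lambda>\<omega>. \<Sum>i\<in>{k..<N}. X i \<omega>) -` R \<inter> space M) \<in> sets M" by blast
  then show ?thesis by (simp add: Int_def conj_ac)
qed

lemma prob_prefix_event_suffix_sum_indep:
  fixes X :: "nat \<Rightarrow> 'a \<Rightarrow> real"
  assumes ind: "indep_vars (\<lambda>_. borel) X {..<N}" and k: "k < N"
    and g: "g \<in> measurable (PiM {..<k} (\<lambda>_. borel)) (count_space UNIV)" and R: "R \<in> sets borel"
  shows "prob {\<omega>\<in>space M. g (\<lambda>i\<in>{..<k}. X i \<omega>) \<and> (\<Sum>i\<in>{k..<N}. X i \<omega>) \<in> R}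
       = prob {\<omega>\<in>space M. g (\<lambda>i\<in>{..<k}. X i \<omega>)} * prob {\<omega>\<in>space M. (\<Sum>i\<in>{k..<N}. X i \<omega>) \<in> R}"
proof -
  let ?past = "\<lambda>\<omega>. \<lambda>i\<in>{..<k}. X i \<omega>" and ?future = "\<lambda>\<omega>. \<lambda>i\<in>{k..<N}. X i \<omega>"
  have iv: "indep_var (PiM {..<k} (\<lambda>_. borel)) ?past (PiM {k..<N} (\<lambda>_. borel)) ?future"
    using k by (intro indep_var_restrict[OF ind]) (auto simp: not_less[symmetric])
  have "(\<lambda>y. \<Sum>i\<in>{k..<N}. y i) \<in> borel_measurable (PiM {k..<N} (\<lambda>_. borel::real measure))"
    by (intro borel_measurable_sum measurable_component_singleton)
  from measurable_sets[OF this R]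
  have Fut: "{y\<in>space (PiM {k..<N} (\<lambda>_. borel::real measure)). (\<Sum>i\<in>{k..<N}. y i) \<in> R}
      \<in> sets (PiM {k..<N} (\<lambda>_. borel))"
    by (simp add: vimage_def Int_def conj_commute)
  from indep_varD[OF iv predE[OF g] Fut] show ?thesis
    by (simp add: vimage_def space_PiM Int_def conj_commute)
qed

lemma prob_first_exit_le_twice_suffix:
  fixes X :: "nat \<Rightarrow> 'a \<Rightarrow> real"
  assumes ind: "indep_vars (\<lambda>_. borel) X {..<N}" and "k \<le> N"
    and P: "{r. P r} \<in> sets borel" and R: "R \<in> sets borel" "0 \<in> R"
    and half: "k < N \<Longrightarrow> 1/2 \<le> prob {\<omega>\<in>space M. (\<Sum>i\<in>{k..<N}. X i \<omega>) \<in> R}"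
  shows "prob {\<omega>\<in>space M. first_exit x k (\<lambda>i. X i \<omega>) \<and> P (\<Sum>i<k. X i \<omega>)}
    \<le> 2 * prob {\<omega>\<in>space M. first_exit x k (\<lambda>i. X i \<omega>) \<and> P (\<Sum>i<k. X i \<omega>)
                          \<and> (\<Sum>i\<in>{k..<N}. X i \<omega>) \<in> R}"
proof (cases "k < N")
  case True
  let ?g = "\<lambda>y. first_exit x k y \<and> P (\<Sum>i<k. y i)"
  have "prob {\<omega>\<in>space M. ?g (\<lambda>i. X i \<omega>) \<and> (\<Sum>i\<in>{k..<N}. X i \<omega>) \<in> R}
      = prob {\<omega>\<in>space M. ?g (\<lambda>i. X i \<omega>)} * prob {\<omega>\<in>space M. (\<Sum>i\<in>{k..<N}. X i \<omega>) \<in> R}"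
    using prob_prefix_event_suffix_sum_indep[OF ind True measurable_first_exit[OF P] R(1)]
    by (simp add: first_exit_restrict sum_lessThan_restrict)
  moreover have "prob {\<omega>\<in>space M. ?g (\<lambda>i. X i \<omega>)} * (1/2)
      \<le> prob {\<omega>\<in>space M. ?g (\<lambda>i. X i \<omega>)} * prob {\<omega>\<in>space M. (\<Sum>i\<in>{k..<N}. X i \<omega>) \<in> R}"
    using half[OF True] by (intro mult_left_mono) auto
  ultimately show ?thesis by simp
next
  case False
  then show ?thesis using \<open>k \<le> N\<close> R(2) by simp
qed

text \<open>Reflection: on the first exit at \<open>k\<close> with \<open>S\<^sub>k \<ge> 0\<close> (resp. \<open>S\<^sub>k < 0\<close>), the endpoint \<open>S\<^sub>N\<close> still
  exceeds \<open>x\<close> in absolute value once the independent suffix sum is \<open>\<ge> 0\<close> (resp. \<open>\<le> 0\<close>), which has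
  probability at least 1/2.\<close>
lemma levy_first_exit_bound:
  fixes X :: "nat \<Rightarrow> 'a \<Rightarrow> real"
  assumes ind: "indep_vars (\<lambda>_. borel) X {..<N}" and k: "k \<le> N"
    and nonneg: "\<And>k. k < N \<Longrightarrow> 1/2 \<le> prob {\<omega>\<in>space M. 0 \<le> (\<Sum>i\<in>{k..<N}. X i \<omega>)}"
    and nonpos: "\<And>k. k < N \<Longrightarrow> 1/2 \<le> prob {\<omega>\<in>space M. (\<Sum>i\<in>{k..<N}. X i \<omega>) \<le> 0}"
  shows "prob {\<omega>\<in>space M. first_exit x k (\<lambda>i. X i \<omega>)}
    \<le> 2 * prob ({\<omega>\<in>space M. first_exit x k (\<lambda>i. X i \<omega>)} \<inter> {\<omega>\<in>space M. x < \<bar>\<Sum>i<N. X i \<omega>\<bar>})"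
proof -
  have Xm: "\<And>i. i < N \<Longrightarrow> X i \<in> borel_measurable M"
    using ind unfolding indep_vars_def by auto
  define E where "E P R = {\<omega>\<in>space M. first_exit x k (\<lambda>i. X i \<omega>) \<and> P (\<Sum>i<k. X i \<omega>)
                          \<and> (\<Sum>i\<in>{k..<N}. X i \<omega>) \<in> R}" for P R
  have E_sets: "E P R \<in> sets M" if "{r. P r} \<in> sets borel" "R \<in> sets borel" for P R
    unfolding E_def using first_exit_suffix_event_sets[OF Xm k that] .
  have borel_sets: "{r::real. True} \<in> sets borel" "{r::real. 0 \<le> r} \<in> sets borel"
    "{r::real. r < 0} \<in> sets borel" by auto
  have "prob (E (\<lambda>_. True) UNIV) = prob (E (\<lambda>r. 0 \<le> r) UNIV) + prob (E (\<lambda>r. r < 0) UNIV)"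
  proof -
    have "E (\<lambda>_. True) UNIV = E (\<lambda>r. 0 \<le> r) UNIV \<union> E (\<lambda>r. r < 0) UNIV"
      "E (\<lambda>r. 0 \<le> r) UNIV \<inter> E (\<lambda>r. r < 0) UNIV = {}" unfolding E_def by auto
    then show ?thesis using E_sets borel_sets by (simp add: finite_measure_Union)
  qed
  also have "\<dots> \<le> 2 * prob (E (\<lambda>r. 0 \<le> r) {0..}) + 2 * prob (E (\<lambda>r. r < 0) {..0})"
    using prob_first_exit_le_twice_suffix[OF ind k, of "\<lambda>r. 0 \<le> r" "{0..}" x]
      prob_first_exit_le_twice_suffix[OF ind k, of "\<lambda>r. r < 0" "{..0}" x] nonneg nonpos
    unfolding E_def by (simp add: atLeast_def atMost_def)
  also have "\<dots> = 2 * prob (E (\<lambda>r. 0 \<le> r) {0..} \<union> E (\<lambda>r. r < 0) {..0})"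
  proof -
    have "E (\<lambda>r. 0 \<le> r) {0..} \<inter> E (\<lambda>r. r < 0) {..0} = {}" unfolding E_def by auto
    then show ?thesis using E_sets borel_sets by (simp add: finite_measure_Union)
  qed
  also have "\<dots> \<le> 2 * prob (E (\<lambda>_. True) UNIV \<inter> {\<omega>\<in>space M. x < \<bar>\<Sum>i<N. X i \<omega>\<bar>})"
  proof -
    have "(\<Sum>i<N. X i \<omega>) = (\<Sum>i<k. X i \<omega>) + (\<Sum>i\<in>{k..<N}. X i \<omega>)" for \<omega>
      using k by (simp add: lessThan_atLeast0 sum.atLeastLessThan_concat)
    then have "E (\<lambda>r. 0 \<le> r) {0..} \<union> E (\<lambda>r. r < 0) {..0}
        \<subseteq> E (\<lambda>_. True) UNIV \<inter> {\<omega>\<in>space M. x < \<bar>\<Sum>i<N. X i \<omega>\<bar>}"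
      unfolding E_def first_exit_def by auto
    moreover have [measurable]: "(\<lambda>\<omega>. \<Sum>i<N. X i \<omega>) \<in> borel_measurable M"
      using Xm by (intro borel_measurable_sum) auto
    ultimately show ?thesis using E_sets borel_sets by (intro mult_left_mono finite_measure_mono) auto
  qed
  finally show ?thesis unfolding E_def by simp
qed

theorem levy_maximal_inequality:
  fixes X :: "nat \<Rightarrow> 'a \<Rightarrow> real"
  assumes ind: "indep_vars (\<lambda>_. borel) X {..<N}"
    and nonneg: "\<And>k. k < N \<Longrightarrow> 1/2 \<le> prob {\<omega>\<in>space M. 0 \<le> (\<Sum>i\<in>{k..<N}. X i \<omega>)}"
    and nonpos: "\<And>k. k < N \<Longrightarrow> 1/2 \<le> prob {\<omega>\<in>space M. (\<Sum>i\<in>{k..<N}. X i \<omega>) \<le> 0}"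
  shows "prob {\<omega>\<in>space M. \<exists>k\<le>N. x < \<bar>\<Sum>i<k. X i \<omega>\<bar>} \<le> 2 * prob {\<omega>\<in>space M. x < \<bar>\<Sum>i<N. X i \<omega>\<bar>}"
proof -
  define A where "A k = {\<omega>\<in>space M. first_exit x k (\<lambda>i. X i \<omega>)}" for k
  let ?T = "{\<omega>\<in>space M. x < \<bar>\<Sum>i<N. X i \<omega>\<bar>}"
  have Xm: "\<And>i. i < N \<Longrightarrow> X i \<in> borel_measurable M"
    using ind unfolding indep_vars_def by auto
  have A_sets: "A k \<in> sets M" if "k \<le> N" for k
    using first_exit_suffix_event_sets[OF Xm that, where P="\<lambda>_. True" and R=UNIV and x=x]
    by (simp add: A_def)
  have T_sets: "?T \<in> sets M"
  proof -
    have [measurable]: "(\<lambda>\<omega>. \<Sum>i<N. X i \<omega>) \<in> borel_measurable M"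
      using Xm by (intro borel_measurable_sum) auto
    show ?thesis by measurable
  qed
  have disj: "disjoint_family_on A {..N}" "disjoint_family_on (\<lambda>k. A k \<inter> ?T) {..N}"
    unfolding disjoint_family_on_def A_def using first_exit_unique by blast+
  have union: "{\<omega>\<in>space M. \<exists>k\<le>N. x < \<bar>\<Sum>i<k. X i \<omega>\<bar>} = (\<Union>k\<in>{..N}. A k)"
    unfolding A_def using ex_first_exit by (fastforce simp: first_exit_def)
  have "prob {\<omega>\<in>space M. \<exists>k\<le>N. x < \<bar>\<Sum>i<k. X i \<omega>\<bar>} = (\<Sum>k\<in>{..N}. prob (A k))"
    unfolding union using A_sets disj(1) by (intro finite_measure_finite_Union) auto
  also have "\<dots> \<le> (\<Sum>k\<in>{..N}. 2 * prob (A k \<inter> ?T))"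
    unfolding A_def using levy_first_exit_bound[OF ind _ nonneg nonpos] by (intro sum_mono) simp
  also have "\<dots> = 2 * prob (\<Union>k\<in>{..N}. A k \<inter> ?T)"
    using A_sets T_sets disj(2) by (subst finite_measure_finite_Union) (auto simp: sum_distrib_left)
  also have "\<dots> \<le> 2 * prob ?T"
    using T_sets by (intro mult_left_mono finite_measure_mono) auto
  finally show ?thesis .
qed

end

lemma standard_brownian_motionD:
  assumes "standard_brownian_motion M B"
  shows "prob_space M"
    and "B t \<in> borel_measurable M"
    and "\<omega> \<in> space M \<Longrightarrow> B 0 \<omega> = 0"
    and "\<omega> \<in> space M \<Longrightarrow> continuous_on {0..} (\<lambda>t. B t \<omega>)"
    and "0 \<le> s \<Longrightarrow> s < t \<Longrightarrow>
      distributed M lborel (\<lambda>\<omega>. B t \<omega> - B s \<omega>) (\<lambda>x. ennreal (normal_density 0 (sqrt (t - s)) x))"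
    and "0 \<le> u 0 \<Longrightarrow> (\<And>i. i < n \<Longrightarrow> u i < u (Suc i)) \<Longrightarrow>
      prob_space.indep_vars M (\<lambda>_. borel) (\<lambda>i \<omega>. B (u (Suc i)) \<omega> - B (u i) \<omega>) {..<n}"
  using assms unfolding standard_brownian_motion_def by auto

text \<open>On a finite grid \<open>0 = u 0 < \<dots> < u N = T\<close> the values of \<open>B\<close> are partial sums of independent
  centred Gaussian increments, so Levy's inequality reduces the maximum to the endpoint.\<close>
lemma brownian_grid_max_square_tail:
  fixes u :: "nat \<Rightarrow> real"
  assumes bm: "standard_brownian_motion M B"
    and u: "u 0 = 0" "strict_mono u" "u N = T" "0 < N"
    and \<theta>: "0 \<le> \<theta>" "\<theta> < 1/2" and z: "0 \<le> z"
  shows "measure M {\<omega>\<in>space M. \<exists>k\<le>N. T * z < (B (u k) \<omega>)\<^sup>2} \<le> 2 * (exp (-\<theta>*z) / sqrt (1 - 2*\<theta>))"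
proof -
  interpret prob_space M using standard_brownian_motionD(1)[OF bm] .
  have u_nonneg: "0 \<le> u k" for k
    using u(1) strict_mono_less_eq[OF u(2), of 0 k] by simp
  have u_less_T: "u k < T" if "k < N" for k
    using strict_monoD[OF u(2) that] u(3) by simp
  have T: "0 < T" using u_less_T[OF \<open>0 < N\<close>] u(1) by simp
  define X where "X i \<omega> = B (u (Suc i)) \<omega> - B (u i) \<omega>" for i \<omega>
  have ind: "indep_vars (\<lambda>_. borel) X {..<N}"
    unfolding X_def using standard_brownian_motionD(6)[OF bm] u strict_monoD[OF u(2)] by simp
  have increment: "distributed M lborel (\<lambda>\<omega>. B T \<omega> - B (u k) \<omega>)
      (\<lambda>x. ennreal (normal_density 0 (sqrt (T - u k)) x))"
    and increment_scale: "0 < sqrt (T - u k)" if "k < N" for k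
    using standard_brownian_motionD(5)[OF bm u_nonneg] u_less_T[OF that] by auto
  have suffix: "(\<Sum>i\<in>{k..<N}. X i \<omega>) = B T \<omega> - B (u k) \<omega>" if "k \<le> N" for k \<omega>
    unfolding X_def using sum_Suc_diff'[OF that, of "\<lambda>i. B (u i) \<omega>"] u(3) by simp
  have prefix: "(\<Sum>i<k. X i \<omega>) = B (u k) \<omega>" if "\<omega> \<in> space M" for k \<omega>
    unfolding X_def using sum_lessThan_telescope[of "\<lambda>i. B (u i) \<omega>" k] u(1)
      standard_brownian_motionD(3)[OF bm that] by simp
  have sq: "T * z < r\<^sup>2 \<longleftrightarrow> sqrt (T * z) < \<bar>r\<bar>" for r :: real
    using T z by (metis real_sqrt_abs real_sqrt_less_iff)
  have "measure M {\<omega>\<in>space M. \<exists>k\<le>N. T * z < (B (u k) \<omega>)\<^sup>2}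
      = prob {\<omega>\<in>space M. \<exists>k\<le>N. sqrt (T * z) < \<bar>\<Sum>i<k. X i \<omega>\<bar>}"
    by (intro arg_cong[where f=prob]) (auto simp: prefix sq)
  also have "\<dots> \<le> 2 * prob {\<omega>\<in>space M. sqrt (T * z) < \<bar>\<Sum>i<N. X i \<omega>\<bar>}"
    using normal_sign_prob_ge_half[OF increment increment_scale] u_less_T
    by (intro levy_maximal_inequality[OF ind]) (simp_all add: suffix)
  also have "prob {\<omega>\<in>space M. sqrt (T * z) < \<bar>\<Sum>i<N. X i \<omega>\<bar>}
      = prob {\<omega>\<in>space M. (sqrt T)\<^sup>2 * z < (B T \<omega> - B (u 0) \<omega>)\<^sup>2}"
    using T u(1) standard_brownian_motionD(3)[OF bm]
    by (intro arg_cong[where f=prob]) (auto simp: prefix u(3) sq)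
  also have "\<dots> \<le> exp (-\<theta>*z) / sqrt (1 - 2*\<theta>)"
    using normal_square_tail[OF increment increment_scale, OF \<open>0 < N\<close> \<open>0 < N\<close>] \<theta> u(1) by simp
  finally show ?thesis by simp
qed

lemma dyadic_grid_approx:
  fixes T s d :: real
  assumes T: "0 < T" and s: "0 \<le> s" "s \<le> T" and d: "0 < d"
  shows "\<exists>m k. k \<le> (2::nat)^m \<and> \<bar>real k * T / 2^m - s\<bar> < d"
proof -
  obtain m :: nat where "T / d < 2^m" using real_arch_pow[of 2 "T/d"] by auto
  then have mesh: "T / 2^m < d" using d by (simp add: field_simps)
  define r where "r = s * 2^m / T"
  define k where "k = nat \<lfloor>r\<rfloor>"
  have "0 \<le> r" unfolding r_def using s T by simp
  then have k: "real k \<le> s * 2^m / T" "s * 2^m / T < real k + 1"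
    unfolding k_def r_def by linarith+
  moreover have "s * 2^m / T \<le> 2^m" using s T by (simp add: field_simps)
  ultimately have "real k \<le> 2^m" by linarith
  then have "k \<le> 2^m" by simp
  moreover have "real k * T / 2^m \<le> s" "s < real k * T / 2^m + T / 2^m"
    using k T by (simp_all add: field_simps)
  ultimately show ?thesis using mesh by (intro exI[of _ m] exI[of _ k]) auto
qed

lemma continuous_exceeds_iff_dyadic:
  fixes f :: "real \<Rightarrow> real"
  assumes f: "continuous_on {0..T} f" and T: "0 < T"
  shows "(\<exists>s\<in>{0..T}. c < f s) \<longleftrightarrow> (\<exists>m. \<exists>k\<le>(2::nat)^m. c < f (real k * T / 2^m))"
proof
  assume "\<exists>s\<in>{0..T}. c < f s"
  then obtain s where s: "s \<in> {0..T}" and c: "c < f s" by blast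
  obtain d where d: "0 < d" and near: "\<And>t. t \<in> {0..T} \<Longrightarrow> dist t s < d \<Longrightarrow> dist (f t) (f s) < f s - c"
    using f s c unfolding continuous_on_iff by (metis diff_gt_0_iff_gt)
  obtain m k where k: "k \<le> (2::nat)^m" and close: "\<bar>real k * T / 2^m - s\<bar> < d"
    using dyadic_grid_approx[of T s d] T d s by auto
  have "real k \<le> 2^m" using k by simp
  then have "real k * T / 2^m \<in> {0..T}" using T by (simp add: field_simps)
  then have "dist (f (real k * T / 2^m)) (f s) < f s - c"
    using near close by (simp add: dist_real_def)
  then have "c < f (real k * T / 2^m)" by (simp add: dist_real_def abs_less_iff)
  then show "\<exists>m. \<exists>k\<le>(2::nat)^m. c < f (real k * T / 2^m)" using k by blast
next
  assume "\<exists>m. \<exists>k\<le>(2::nat)^m. c < f (real k * T / 2^m)"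
  then obtain m k where "k \<le> (2::nat)^m" "c < f (real k * T / 2^m)" by blast
  moreover have "real k \<le> 2^m" using \<open>k \<le> 2^m\<close> by simp
  then have "real k * T / 2^m \<in> {0..T}" using T by (simp add: field_simps)
  ultimately show "\<exists>s\<in>{0..T}. c < f s" by blast
qed

text \<open>The running maximum is the increasing limit of maxima over dyadic grids, by path continuity.\<close>
lemma brownian_max_square_tail:
  assumes bm: "standard_brownian_motion M B" and T: "0 < T"
    and \<theta>: "0 \<le> \<theta>" "\<theta> < 1/2" and z: "0 \<le> z"
  shows "{\<omega>\<in>space M. \<exists>s\<in>{0..T}. T * z < (B s \<omega>)\<^sup>2} \<in> sets M"
    and "measure M {\<omega>\<in>space M. \<exists>s\<in>{0..T}. T * z < (B s \<omega>)\<^sup>2} \<le> 2 * (exp (-\<theta>*z) / sqrt (1 - 2*\<theta>))"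
proof -
  interpret prob_space M using standard_brownian_motionD(1)[OF bm] .
  have [measurable]: "B t \<in> borel_measurable M" for t using standard_brownian_motionD(2)[OF bm] .
  define D where "D m = {\<omega>\<in>space M. \<exists>k\<le>(2::nat)^m. T * z < (B (real k * T / 2^m) \<omega>)\<^sup>2}" for m
  have D_sets: "D m \<in> sets M" for m unfolding D_def by measurable
  have "incseq D"
  proof (rule incseq_SucI, rule subsetI)
    fix m \<omega> assume "\<omega> \<in> D m"
    then obtain k where "\<omega> \<in> space M" "k \<le> 2^m" "T * z < (B (real k * T / 2^m) \<omega>)\<^sup>2"
      unfolding D_def by auto
    moreover have "real (2*k) * T / 2^Suc m = real k * T / 2^m" by simp
    ultimately show "\<omega> \<in> D (Suc m)" unfolding D_def by (auto intro!: exI[of _ "2*k"])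
  qed
  have union: "{\<omega>\<in>space M. \<exists>s\<in>{0..T}. T * z < (B s \<omega>)\<^sup>2} = (\<Union>m. D m)"
  proof (intro set_eqI)
    fix \<omega>
    show "\<omega> \<in> {\<omega>\<in>space M. \<exists>s\<in>{0..T}. T * z < (B s \<omega>)\<^sup>2} \<longleftrightarrow> \<omega> \<in> (\<Union>m. D m)"
    proof (cases "\<omega> \<in> space M")
      case True
      have "continuous_on {0..T} (\<lambda>t. (B t \<omega>)\<^sup>2)"
        using continuous_on_subset[OF standard_brownian_motionD(4)[OF bm True]]
        by (intro continuous_intros) auto
      from continuous_exceeds_iff_dyadic[OF this T] show ?thesis
        using True unfolding D_def by simp
    qed (simp add: D_def)
  qed
  show "{\<omega>\<in>space M. \<exists>s\<in>{0..T}. T * z < (B s \<omega>)\<^sup>2} \<in> sets M"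
    unfolding union using D_sets by auto
  have "(\<lambda>m. prob (D m)) \<longlonglongrightarrow> prob (\<Union>m. D m)"
    using D_sets \<open>incseq D\<close> by (intro finite_Lim_measure_incseq) auto
  moreover have "prob (D m) \<le> 2 * (exp (-\<theta>*z) / sqrt (1 - 2*\<theta>))" for m
    unfolding D_def using T
    by (intro brownian_grid_max_square_tail[where u="\<lambda>k. real k * T / 2^m" and N="2^m", OF bm _ _ _ _ \<theta> z])
      (auto simp: strict_mono_def divide_strict_right_mono)
  ultimately show "prob {\<omega>\<in>space M. \<exists>s\<in>{0..T}. T * z < (B s \<omega>)\<^sup>2} \<le> 2 * (exp (-\<theta>*z) / sqrt (1 - 2*\<theta>))"
    unfolding union by (intro LIMSEQ_le_const2) auto
qed

lemma brownian_max_square_tail_two_horizons: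
  assumes bm: "standard_brownian_motion M B" and T: "0 < T\<^sub>1" "0 < T\<^sub>2"
    and \<theta>: "0 \<le> \<theta>" "\<theta> < 1/2" and z: "0 \<le> z"
  shows "{\<omega>\<in>space M. \<exists>T\<in>{T\<^sub>1, T\<^sub>2}. \<exists>s\<in>{0..T}. T * z < (B s \<omega>)\<^sup>2} \<in> sets M"
    and "measure M {\<omega>\<in>space M. \<exists>T\<in>{T\<^sub>1, T\<^sub>2}. \<exists>s\<in>{0..T}. T * z < (B s \<omega>)\<^sup>2}
      \<le> 4 * (exp (-\<theta>*z) / sqrt (1 - 2*\<theta>))"
proof -
  interpret prob_space M using standard_brownian_motionD(1)[OF bm] .
  note tail = brownian_max_square_tail[OF bm _ \<theta> z]
  have Un: "{\<omega>\<in>space M. \<exists>T\<in>{T\<^sub>1, T\<^sub>2}. \<exists>s\<in>{0..T}. T * z < (B s \<omega>)\<^sup>2}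
      = {\<omega>\<in>space M. \<exists>s\<in>{0..T\<^sub>1}. T\<^sub>1 * z < (B s \<omega>)\<^sup>2} \<union> {\<omega>\<in>space M. \<exists>s\<in>{0..T\<^sub>2}. T\<^sub>2 * z < (B s \<omega>)\<^sup>2}"
    by auto
  show "{\<omega>\<in>space M. \<exists>T\<in>{T\<^sub>1, T\<^sub>2}. \<exists>s\<in>{0..T}. T * z < (B s \<omega>)\<^sup>2} \<in> sets M"
    unfolding Un using tail(1)[OF T(1)] tail(1)[OF T(2)] by auto
  show "prob {\<omega>\<in>space M. \<exists>T\<in>{T\<^sub>1, T\<^sub>2}. \<exists>s\<in>{0..T}. T * z < (B s \<omega>)\<^sup>2}
      \<le> 4 * (exp (-\<theta>*z) / sqrt (1 - 2*\<theta>))"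
    unfolding Un using tail[OF T(1)] tail[OF T(2)] by (intro order.trans[OF measure_Un_le]) auto
qed

lemma ex_power_bracket:
  fixes q t :: real
  assumes q: "1 < q" and t: "1 \<le> t"
  shows "\<exists>m. q^m \<le> t \<and> t \<le> q^Suc m"
proof -
  obtain n where "t \<le> q^n" using real_arch_pow[OF q, of t] by (auto intro: less_imp_le)
  then obtain n where n: "t \<le> q^n" and least: "\<forall>j<n. \<not> t \<le> q^j"
    using exists_least_iff[of "\<lambda>n. t \<le> q^n"] by blast
  show ?thesis
  proof (cases n)
    case 0
    then show ?thesis using n t q by (intro exI[of _ 0]) auto
  next
    case (Suc m)
    then show ?thesis using n least by (intro exI[of _ m]) auto
  qed
qed

lemma ex_geometric_block:
  fixes q t :: real
  assumes q: "1 < q" and t: "0 < t"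
  shows "\<exists>m. \<exists>T\<in>{q^Suc m, 1 / q^m}. T / q \<le> t \<and> t \<le> T \<and> real m * ln q \<le> \<bar>ln t\<bar>"
proof (cases "1 \<le> t")
  case True
  then obtain m where m: "q^m \<le> t" "t \<le> q^Suc m" using ex_power_bracket[OF q] by blast
  then have "ln (q^m) \<le> ln t" using q t by (subst ln_le_cancel_iff) auto
  then show ?thesis using m q True by (intro exI[of _ m] bexI[of _ "q^Suc m"]) (auto simp: ln_realpow)
next
  case False
  then obtain m where m: "q^m \<le> 1/t" "1/t \<le> q^Suc m" using ex_power_bracket[OF q, of "1/t"] t by auto
  then have "ln (q^m) \<le> ln (1/t)" using q t by (subst ln_le_cancel_iff) auto
  moreover have "1 / q^Suc m \<le> t" "t \<le> 1 / q^m" using m t q by (simp_all add: field_simps)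
  ultimately show ?thesis using False t q
    by (intro exI[of _ m] bexI[of _ "1 / q^m"]) (auto simp: ln_realpow ln_div field_simps)
qed

lemma log_penalised_exceedance_cover:
  fixes t v q a y :: real
  assumes t: "0 < t" and q: "1 < q" and a: "0 \<le> a" and y: "0 \<le> y"
    and exceeds: "y < v\<^sup>2 / t - a * ln (1 + \<bar>ln t\<bar>)"
  shows "\<exists>m. \<exists>T\<in>{q^Suc m, 1 / q^m}. t \<le> T \<and> T * ((y + a * ln (1 + real m * ln q)) / q) < v\<^sup>2"
proof -
  obtain m T where T: "T \<in> {q^Suc m, 1 / q^m}" "T / q \<le> t" "t \<le> T"
    and m: "real m * ln q \<le> \<bar>ln t\<bar>"
    using ex_geometric_block[OF q t] by blast
  define z where "z = y + a * ln (1 + real m * ln q)"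
  have "0 \<le> real m * ln q" using q by simp
  then have "ln (1 + real m * ln q) \<le> ln (1 + \<bar>ln t\<bar>)" and "0 \<le> z"
    using m a y by (simp_all add: z_def)
  then have "z \<le> y + a * ln (1 + \<bar>ln t\<bar>)" using a by (simp add: z_def mult_left_mono)
  then have "t * z \<le> t * (y + a * ln (1 + \<bar>ln t\<bar>))" using t by (intro mult_left_mono) auto
  moreover have "t * (y + a * ln (1 + \<bar>ln t\<bar>)) < v\<^sup>2" using exceeds t by (simp add: field_simps)
  ultimately have "t * z < v\<^sup>2" by linarith
  moreover have "T * (z / q) \<le> t * z"
    using mult_right_mono[OF T(2) \<open>0 \<le> z\<close>] by (simp add: field_simps)
  ultimately show ?thesis using T unfolding z_def by force
qed

lemma SUP_log_penalised_exceedance_cover: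
  fixes f :: "real \<Rightarrow> real" and q a y :: real
  assumes q: "1 < q" and a: "0 \<le> a" and y: "0 \<le> y"
    and "ereal y < (SUP t\<in>{0<..}. ereal (f t ^ 2 / t - a * ln (1 + \<bar>ln t\<bar>)))"
  shows "\<exists>m. \<exists>T\<in>{q^Suc m, 1 / q^m}. \<exists>s\<in>{0..T}. T * ((y + a * ln (1 + real m * ln q)) / q) < (f s)\<^sup>2"
proof -
  obtain t where t: "0 < t" and exceeds: "y < (f t)\<^sup>2 / t - a * ln (1 + \<bar>ln t\<bar>)"
    using assms(4) by (auto simp: less_SUP_iff)
  from log_penalised_exceedance_cover[OF t q a y exceeds]
  obtain m T where "T \<in> {q^Suc m, 1 / q^m}" "t \<le> T"
    "T * ((y + a * ln (1 + real m * ln q)) / q) < (f t)\<^sup>2" by blast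
  then show ?thesis using t by (intro exI[of _ m] bexI[of _ T] bexI[of _ t]) auto
qed

lemma summable_one_plus_linear_powr:
  fixes c p :: real
  assumes c: "0 < c" and p: "1 < p"
  shows "summable (\<lambda>m::nat. (1 + real m * c) powr (-p))"
proof (rule summable_comparison_test'[where N=1])
  show "summable (\<lambda>m::nat. c powr (-p) * real m powr (-p))"
    using p by (intro summable_mult) (simp add: summable_real_powr_iff)
  fix m :: nat assume "1 \<le> m"
  then have "(1 + real m * c) powr (-p) \<le> (real m * c) powr (-p)"
    using c p by (intro powr_mono2') auto
  also have "\<dots> = c powr (-p) * real m powr (-p)"
    using c by (simp add: powr_mult mult.commute)
  finally show "norm ((1 + real m * c) powr (-p)) \<le> c powr (-p) * real m powr (-p)" by simp
qed

lemma exp_penalised_level_le: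
  fixes \<theta> q a b y x :: real
  assumes "0 < q" "b * q \<le> \<theta>" "0 \<le> y" "0 \<le> x"
  shows "exp (-\<theta> * ((y + a * ln (1 + x)) / q)) \<le> exp (-b*y) * (1 + x) powr (-(a*\<theta>/q))"
proof -
  have "exp (-\<theta> * ((y + a * ln (1 + x)) / q)) = exp (-(\<theta>/q) * y) * (1 + x) powr (-(a*\<theta>/q))"
    using assms by (simp add: powr_def exp_add[symmetric] field_simps)
  moreover have "b * y \<le> (\<theta>/q) * y" using assms by (intro mult_right_mono) (simp_all add: field_simps)
  ultimately show ?thesis by (simp add: mult_right_mono)
qed

lemma ex_tail_parameters:
  fixes a b :: real
  assumes "2 < a" "0 < b" "b < 1/2"
  shows "\<exists>q \<theta>. 1 < q \<and> 0 \<le> \<theta> \<and> \<theta> < 1/2 \<and> b * q \<le> \<theta> \<and> q < a * \<theta>"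
proof -
  define \<mu> where "\<mu> = max b (1/a)"
  have "1/a < 1/2" using assms by (simp add: field_simps)
  then have \<mu>: "b \<le> \<mu>" "1/a \<le> \<mu>" "\<mu> < 1/2"
    using assms(3) unfolding \<mu>_def max_less_iff_conj by simp_all
  define \<theta> where "\<theta> = (1/2 + \<mu>) / 2"
  have \<theta>: "b < \<theta>" "1/a < \<theta>" "\<theta> < 1/2" using \<mu> unfolding \<theta>_def by auto
  define r where "r = \<theta>/b"
  define \<nu> where "\<nu> = min r (a*\<theta>)"
  have "1 < r" "1 < a*\<theta>" using \<theta> assms by (simp_all add: r_def field_simps)
  then have "1 < \<nu>" "\<nu> \<le> r" "\<nu> \<le> a*\<theta>" unfolding \<nu>_def min_less_iff_conj by simp_all
  then have "1 < (1 + \<nu>) / 2" "(1 + \<nu>) / 2 < r" "(1 + \<nu>) / 2 < a*\<theta>" by (simp_all add: field_simps)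
  moreover from this(2) have "b * ((1 + \<nu>) / 2) \<le> \<theta>" using assms by (simp add: r_def field_simps)
  ultimately show ?thesis
    using \<theta> assms by (intro exI[of _ "(1 + \<nu>) / 2"] exI[of _ \<theta>]) (auto simp: field_simps)
qed

lemma brownian_log_penalised_tail:
  fixes M :: "'a measure" and B :: "real \<Rightarrow> 'a \<Rightarrow> real"
  assumes bm: "standard_brownian_motion M B"
    and q: "1 < q" and \<theta>: "0 \<le> \<theta>" "\<theta> < 1/2" and bq: "b * q \<le> \<theta>" and qa: "q < a * \<theta>"
    and y: "0 \<le> y"
  shows "measure M {\<omega>\<in>space M.
           (SUP t\<in>{0<..}. ereal (B t \<omega> ^ 2 / t - a * ln (1 + \<bar>ln t\<bar>))) > ereal y}
    \<le> 4 / sqrt (1 - 2*\<theta>) * (\<Sum>m. (1 + real m * ln q) powr (-(a*\<theta>/q))) * exp (-b*y)"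
proof -
  interpret prob_space M using standard_brownian_motionD(1)[OF bm] .
  have "0 < a * \<theta>" using q qa by linarith
  then have "0 < a" using \<theta>(1) by (auto simp: zero_less_mult_iff)
  define C where "C = 4 / sqrt (1 - 2*\<theta>) * exp (-b*y)"
  define w where "w m = (1 + real m * ln q) powr (-(a*\<theta>/q))" for m :: nat
  define z where "z m = (y + a * ln (1 + real m * ln q)) / q" for m :: nat
  define U where "U m = {\<omega>\<in>space M. \<exists>T\<in>{q^Suc m, 1 / q^m}. \<exists>s\<in>{0..T}. T * z m < (B s \<omega>)\<^sup>2}" for m
  have U: "U m \<in> sets M" "prob (U m) \<le> C * w m" for m
  proof -
    have z: "0 \<le> z m" using q y \<open>0 < a\<close> by (simp add: z_def)
    have T: "0 < q^Suc m" "0 < 1/q^m" using q by simp_all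
    note tail = brownian_max_square_tail_two_horizons[OF bm T \<theta> z]
    show "U m \<in> sets M" using tail(1) by (simp add: U_def)
    have "prob (U m) \<le> 4 / sqrt (1 - 2*\<theta>) * exp (-\<theta> * z m)"
      using tail(2) by (simp add: U_def)
    also have "\<dots> \<le> 4 / sqrt (1 - 2*\<theta>) * (exp (-b*y) * w m)"
      unfolding z_def w_def using exp_penalised_level_le[of q b \<theta> y "real m * ln q" a] q bq y \<theta>
      by (intro mult_left_mono) auto
    finally show "prob (U m) \<le> C * w m" by (simp add: C_def ac_simps)
  qed
  have "1 < a * \<theta> / q" using q qa by (simp add: pos_less_divide_eq)
  then have "summable w"
    unfolding w_def using q by (intro summable_one_plus_linear_powr) simp_all
  then have "summable (\<lambda>m. C * w m)" by (rule summable_mult)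
  then have summable_U: "summable (\<lambda>m. prob (U m))"
    by (rule summable_comparison_test'[where N=0]) (use U(2) in simp)
  let ?E = "{\<omega>\<in>space M. (SUP t\<in>{0<..}. ereal (B t \<omega> ^ 2 / t - a * ln (1 + \<bar>ln t\<bar>))) > ereal y}"
  have "?E \<subseteq> (\<Union>m. U m)"
  proof
    fix \<omega> assume "\<omega> \<in> ?E"
    then have \<omega>: "\<omega> \<in> space M"
      and "ereal y < (SUP t\<in>{0<..}. ereal (B t \<omega> ^ 2 / t - a * ln (1 + \<bar>ln t\<bar>)))" by auto
    from SUP_log_penalised_exceedance_cover[OF q less_imp_le[OF \<open>0 < a\<close>] y, of "\<lambda>t. B t \<omega>", OF this(2)]
    obtain m where "\<exists>T\<in>{q^Suc m, 1 / q^m}. \<exists>s\<in>{0..T}. T * z m < (B s \<omega>)\<^sup>2"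
      unfolding z_def[symmetric] by blast
    then show "\<omega> \<in> (\<Union>m. U m)" unfolding U_def using \<omega> by blast
  qed
  then have "measure M ?E \<le> measure M (\<Union>m. U m)"
  proof (cases "?E \<in> sets M")
    case True
    then show ?thesis using \<open>?E \<subseteq> (\<Union>m. U m)\<close> U(1) by (intro finite_measure_mono) auto
  qed (simp add: measure_notin_sets)
  also have "\<dots> \<le> (\<Sum>m. prob (U m))"
    using U(1) summable_U by (intro finite_measure_subadditive_countably) auto
  also have "\<dots> \<le> (\<Sum>m. C * w m)"
    using summable_U \<open>summable w\<close> U(2) by (intro suminf_le summable_mult) auto
  also have "\<dots> = C * suminf w"
    using \<open>summable w\<close> by (rule suminf_mult)
  finally show ?thesis unfolding C_def w_def[abs_def] by (simp add: ac_simps)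
qed

theorem theoremA1:
  fixes M :: "'a measure" and B :: "real \<Rightarrow> 'a \<Rightarrow> real"
  assumes "standard_brownian_motion M B"
  shows "\<forall>a b::real. a > 2 \<and> b < 1/2 \<longrightarrow>
    (\<exists>c::real. \<forall>y::real. y \<ge> 0 \<longrightarrow>
      measure M {\<omega>\<in>space M.
         (SUP t\<in>{0<..}. ereal (B t \<omega> ^ 2 / t - a * ln (1 + \<bar>ln t\<bar>))) > ereal y}
      \<le> c * exp (- b * y))"
proof (intro allI impI)
  interpret prob_space M using standard_brownian_motionD(1)[OF assms] .
  fix a b :: real assume ab: "a > 2 \<and> b < 1/2"
  show "\<exists>c. \<forall>y\<ge>0. measure M {\<omega>\<in>space M.
         (SUP t\<in>{0<..}. ereal (B t \<omega> ^ 2 / t - a * ln (1 + \<bar>ln t\<bar>))) > ereal y} \<le> c * exp (- b * y)"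
  proof (cases "b \<le> 0")
    case True
    have "prob A \<le> 1 * exp (- b * y)" if "0 \<le> y" for A y
    proof -
      have "0 \<le> - b * y" using mult_nonpos_nonneg[OF True that] by simp
      then show ?thesis
        using prob_le_1[of A] by (simp add: order.trans[OF _ one_le_exp_iff[THEN iffD2]])
    qed
    then show ?thesis by blast
  next
    case False
    then obtain q \<theta> where "1 < q" "0 \<le> \<theta>" "\<theta> < 1/2" "b * q \<le> \<theta>" "q < a * \<theta>"
      using ex_tail_parameters[of a b] ab by auto
    from brownian_log_penalised_tail[OF assms this] show ?thesis by blast
  qed
qed

end
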